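(* Let $0<R\le\infty$ and let $\varphi,\psi$ be quasiconcave functions on $(0,R)$. Then there are constants $0<c\le C$ such that $$c\bigl(S_\varphi f(t)+T_\psi f(t)\bigr)\le S_\varphi(f^{**})(t)+T_\psi(f^{**})(t)\le C\bigl(S_\varphi f(t)+T_\psi f(t)\bigr)$$ for every measurable $f$ on $(0,R)$ and every $t\in(0,R)$ if and only if both $\varphi$ and $\psi$ satisfy the $B$-condition.
   Context: For a measurable a.e. finite function $f$ on $(0,R)$, $f^*$ is its non-increasing rearrangement, $f^*(t)=\inf\{\lambda>0: |\{x:|f(x)|>\lambda\}|\le t\}$, and $f^{**}(t)=\frac1t\int_0^t f^*(s)\,ds$. A function $\varphi$ is quasiconcave if $\varphi(t)=0$ iff $t=0$, $\varphi$ is non-decreasing, and $\varphi(t)/t$ is non-increasing on $(0,R)$. It satisfies the $B$-condition if there is $C>0$ with $\frac1t\int_0^t \frac{ds}{\varphi(s)}\le \frac{C}{\varphi(t)}$ for all $t\in(0,R)$. $S_\varphi f(t)=\frac{1}{\varphi(t)}\sup_{0<s<t}\varphi(s)f^*(s)$ and $T_\psi f(t)=\frac{1}{\psi(t)}\sup_{t<s<R}\psi(s)f^*(s)$ for $t\in(0,R)$; $S_\varphi(f^{**})$, $T_\psi(f^{**})$ denote these operators applied to the function $f^{**}$. *)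

theory Defs
  imports "HOL-Analysis.Analysis"
begin

definition ivl :: "ereal \<Rightarrow> real set" where
  "ivl R = {t. 0 < t \<and> ereal t < R}"

definition rearr :: "ereal \<Rightarrow> (real \<Rightarrow> ennreal) \<Rightarrow> real \<Rightarrow> ennreal" where
  "rearr R g t = Inf {lam. 0 < lam \<and> emeasure lborel {x \<in> ivl R. lam < g x} \<le> ennreal t}"

definition fstar :: "ereal \<Rightarrow> (real \<Rightarrow> real) \<Rightarrow> real \<Rightarrow> ennreal" where
  "fstar R f = rearr R (\<lambda>x. ennreal \<bar>f x\<bar>)"

definition fstarstar :: "ereal \<Rightarrow> (real \<Rightarrow> real) \<Rightarrow> real \<Rightarrow> ennreal" where
  "fstarstar R f t = ennreal (1 / t) * (\<integral>\<^sup>+ s\<in>{0<..<t}. fstar R f s \<partial>lborel)"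

definition S_op :: "ereal \<Rightarrow> (real \<Rightarrow> real) \<Rightarrow> (real \<Rightarrow> ennreal) \<Rightarrow> real \<Rightarrow> ennreal" where
  "S_op R \<phi> g t = ennreal (1 / \<phi> t) * (SUP s\<in>{0<..<t}. ennreal (\<phi> s) * rearr R g s)"

definition T_op :: "ereal \<Rightarrow> (real \<Rightarrow> real) \<Rightarrow> (real \<Rightarrow> ennreal) \<Rightarrow> real \<Rightarrow> ennreal" where
  "T_op R \<psi> g t = ennreal (1 / \<psi> t) * (SUP s\<in>{s. t < s \<and> ereal s < R}. ennreal (\<psi> s) * rearr R g s)"

definition quasiconcave_on :: "ereal \<Rightarrow> (real \<Rightarrow> real) \<Rightarrow> bool" where
  "quasiconcave_on R \<phi> \<longleftrightarrow>
     (\<forall>t. 0 \<le> t \<and> ereal t < R \<longrightarrow> (\<phi> t = 0 \<longleftrightarrow> t = 0)) \<and>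
     (\<forall>s t. 0 \<le> s \<and> s \<le> t \<and> ereal t < R \<longrightarrow> \<phi> s \<le> \<phi> t) \<and>
     (\<forall>s t. s \<in> ivl R \<and> t \<in> ivl R \<and> s \<le> t \<longrightarrow> \<phi> t / t \<le> \<phi> s / s)"

definition B_condition :: "ereal \<Rightarrow> (real \<Rightarrow> real) \<Rightarrow> bool" where
  "B_condition R \<phi> \<longleftrightarrow> (\<exists>C>0. \<forall>t\<in>ivl R.
     ennreal (1 / t) * (\<integral>\<^sup>+ s\<in>{0<..<t}. ennreal (1 / \<phi> s) \<partial>lborel) \<le> ennreal (C / \<phi> t))"

end

theory Submission
  imports Defs
begin

text \<open>
  The lower estimate holds with \<open>c = 1\<close>, because \<open>f\<^sup>* \<le> (f\<^sup>*\<^sup>*)\<^sup>*\<close>. For the upper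
  estimate, the definition of \<open>S\<^sub>\<phi>\<close> gives \<open>f\<^sup>* u \<le> \<phi> t \<cdot> S\<^sub>\<phi> f t / \<phi> u\<close> on \<open>(0, t)\<close>; integrating
  and using the B-condition for \<open>\<phi>\<close> yields \<open>f\<^sup>*\<^sup>* t \<le> A \<cdot> S\<^sub>\<phi> f t\<close>, whence
  \<open>S\<^sub>\<phi> (f\<^sup>*\<^sup>*) \<le> A \<cdot> S\<^sub>\<phi> f\<close>. In the same way, splitting the integral of \<open>f\<^sup>*\<close> over \<open>(0, s)\<close> at
  \<open>t < s\<close> and using that \<open>\<psi> s / s\<close> is non-increasing gives \<open>T\<^sub>\<psi> (f\<^sup>*\<^sup>*) t \<le> f\<^sup>*\<^sup>* t + B \<cdot> T\<^sub>\<psi> f t\<close>.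

  Test the upper estimate with \<open>f = 1/\<phi>\<close> on \<open>(0, t)\<close>: then \<open>S\<^sub>\<phi> f t \<le> 1/\<phi> t\<close> and
  \<open>T\<^sub>\<psi> f t = 0\<close>, so \<open>\<phi> (t/2) \<cdot> f\<^sup>*\<^sup>* t \<le> C\<close>. Since \<open>f\<^sup>* u \<ge> f (2u) \<ge> 1 / (2 \<phi> u)\<close>, this bounds the
  integral of \<open>1/\<phi>\<close> over \<open>(0, t/2)\<close> by a multiple of \<open>t / \<phi> t\<close>, and quasiconcavity controls the
  integral over \<open>(t/2, t)\<close>. For \<open>\<psi>\<close> the test function is \<open>1 / \<psi> (max \<tau> x)\<close> on \<open>(0, t)\<close>,
  evaluated at the point \<open>\<tau>\<close>: the truncation keeps \<open>S\<^sub>\<phi> f \<tau>\<close> bounded, and \<open>\<tau> \<rightarrow> 0\<close> by monotone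
  convergence.
\<close>

lemma ennreal_mult_inverse_cancel:
  assumes "0 < p"
  shows "ennreal p * (ennreal (1 / p) * x) = x" "ennreal (1 / p) * (ennreal p * x) = x"
proof -
  have "ennreal p * ennreal (1 / p) = 1"
    using assms by (simp add: ennreal_mult''[symmetric])
  then show "ennreal p * (ennreal (1 / p) * x) = x"
    by (simp add: mult.assoc[symmetric])
  have "ennreal (1 / p) * (ennreal p * x) = (ennreal p * ennreal (1 / p)) * x"
    by (simp add: ac_simps)
  with \<open>ennreal p * ennreal (1 / p) = 1\<close> show "ennreal (1 / p) * (ennreal p * x) = x" by simp
qed

lemma ennreal_mult_divide_cancel: "0 < p \<Longrightarrow> ennreal p * ennreal (x / p) = ennreal x"
  by (simp add: ennreal_mult'[symmetric])

lemma ennreal_inverse_mult_le_iff: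
  assumes "0 < p"
  shows "ennreal (1 / p) * x \<le> y \<longleftrightarrow> x \<le> ennreal p * y"
proof -
  have "ennreal (1 / p) * x \<le> y \<longleftrightarrow> ennreal p * (ennreal (1 / p) * x) \<le> ennreal p * y"
    using assms by (simp add: ennreal_mult_le_mult_iff)
  then show ?thesis using assms by (simp add: ennreal_mult_inverse_cancel)
qed

lemma incseq_Ioo_divide_Suc_Suc:
  fixes b :: real
  assumes "0 < b"
  shows "incseq (\<lambda>n. {b / Suc (Suc n)<..<b})"
  unfolding incseq_def
proof (intro allI impI subsetI)
  fix m n :: nat and x assume "m \<le> n" "x \<in> {b / Suc (Suc m)<..<b}"
  moreover have "b / Suc (Suc n) \<le> b / Suc (Suc m)"
    using \<open>m \<le> n\<close> \<open>0 < b\<close> by (intro divide_left_mono) auto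
  ultimately show "x \<in> {b / Suc (Suc n)<..<b}" by auto
qed

lemma UN_Ioo_divide_Suc_Suc:
  fixes b :: real
  assumes "0 < b"
  shows "(\<Union>n. {b / Suc (Suc n)<..<b}) = {0<..<b}"
proof
  show "(\<Union>n. {b / Suc (Suc n)<..<b}) \<subseteq> {0<..<b}"
  proof
    fix x assume "x \<in> (\<Union>n. {b / Suc (Suc n)<..<b})"
    then obtain n where "b / Suc (Suc n) < x" "x < b" by auto
    moreover have "0 < b / Suc (Suc n)" using assms by simp
    ultimately show "x \<in> {0<..<b}" by simp
  qed
  show "{0<..<b} \<subseteq> (\<Union>n. {b / Suc (Suc n)<..<b})"
  proof
    fix x assume x: "x \<in> {0<..<b}"
    obtain n :: nat where "b / x < real n" using reals_Archimedean2 by blast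
    then have "b / Suc (Suc n) < x" using x by (simp add: field_simps)
    with x show "x \<in> (\<Union>n. {b / Suc (Suc n)<..<b})" by auto
  qed
qed

lemma nn_integral_Ioo_le_if_tails:
  fixes h :: "real \<Rightarrow> ennreal" and b :: real
  assumes meas: "(\<lambda>u. h u * indicator {0<..<b} u) \<in> borel_measurable lborel" and "0 < b"
    and tails: "\<And>\<tau>. 0 < \<tau> \<Longrightarrow> \<tau> < b \<Longrightarrow> (\<integral>\<^sup>+ u\<in>{\<tau><..<b}. h u \<partial>lborel) \<le> K"
  shows "(\<integral>\<^sup>+ u\<in>{0<..<b}. h u \<partial>lborel) \<le> K"
proof -
  define A where "A n = {b / Suc (Suc n)<..<b}" for n :: nat
  let ?\<mu> = "density lborel (\<lambda>u. h u * indicator {0<..<b} u)"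
  have UA: "(\<Union>n. A n) = {0<..<b}" unfolding A_def using \<open>0 < b\<close> by (rule UN_Ioo_divide_Suc_Suc)
  have \<mu>: "emeasure ?\<mu> B = (\<integral>\<^sup>+ u\<in>B. h u \<partial>lborel)" if "B \<subseteq> {0<..<b}" "B \<in> sets lborel" for B
    using emeasure_density[OF meas that(2)] that(1)
    by (auto intro!: nn_integral_cong split: split_indicator)
  have "(\<integral>\<^sup>+ u\<in>{0<..<b}. h u \<partial>lborel) = emeasure ?\<mu> (\<Union>n. A n)"
    unfolding UA by (rule \<mu>[symmetric]) simp_all
  also have "\<dots> = (SUP n. emeasure ?\<mu> (A n))"
    using incseq_Ioo_divide_Suc_Suc[OF \<open>0 < b\<close>]
    by (intro SUP_emeasure_incseq[symmetric]) (auto simp: A_def)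
  also have "\<dots> = (SUP n. (\<integral>\<^sup>+ u\<in>A n. h u \<partial>lborel))"
    using UA by (intro SUP_cong \<mu>) (auto simp: A_def)
  also have "\<dots> \<le> K"
    unfolding A_def using \<open>0 < b\<close>
    by (intro SUP_least tails) (simp_all add: field_simps add_pos_nonneg)
  finally show ?thesis .
qed

section \<open>Non-increasing rearrangements\<close>

lemma mem_ivl_iff: "t \<in> ivl R \<longleftrightarrow> 0 < t \<and> ereal t < R"
  by (simp add: ivl_def)

lemma ereal_less_if_le_less: "s \<le> t \<Longrightarrow> ereal t < R \<Longrightarrow> ereal s < R"
  by (meson ereal_less_eq(3) le_less_trans)

lemma ivl_downward_closed: "t \<in> ivl R \<Longrightarrow> 0 < s \<Longrightarrow> s \<le> t \<Longrightarrow> s \<in> ivl R"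
  unfolding ivl_def by (auto intro: ereal_less_if_le_less)

lemma is_interval_antimono_on_level_set:
  fixes g :: "real \<Rightarrow> 'a::preorder"
  assumes "antimono_on (ivl R) g"
  shows "is_interval {x \<in> ivl R. l < g x}"
  unfolding is_interval_1
proof (intro ballI allI impI)
  fix a b x assume a: "a \<in> {x \<in> ivl R. l < g x}" and b: "b \<in> {x \<in> ivl R. l < g x}"
    and x: "a \<le> x \<and> x \<le> b"
  then have "x \<in> ivl R" by (auto simp: mem_ivl_iff intro: ereal_less_if_le_less)
  with b x assms have "g b \<le> g x" by (auto dest: monotone_onD)
  with b \<open>x \<in> ivl R\<close> show "x \<in> {x \<in> ivl R. l < g x}" by (auto intro: less_le_trans)
qed

lemma sets_lborel_ivl [measurable]: "ivl R \<in> sets lborel"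
proof -
  have "is_interval (ivl R)"
    unfolding is_interval_1 by (auto simp: mem_ivl_iff intro: ereal_less_if_le_less)
  then show ?thesis by (simp add: real_interval_borel_measurable)
qed

lemma sets_lborel_antimono_on_level_set:
  fixes g :: "real \<Rightarrow> 'a::preorder"
  shows "antimono_on (ivl R) g \<Longrightarrow> {x \<in> ivl R. l < g x} \<in> sets lborel"
  by (simp add: is_interval_antimono_on_level_set real_interval_borel_measurable)

lemma sets_level_set_abs:
  assumes "f \<in> borel_measurable (restrict_space lborel (ivl R))"
  shows "{x \<in> ivl R. l < ennreal \<bar>f x\<bar>} \<in> sets lborel"
proof -
  have "(\<lambda>x. ennreal \<bar>f x\<bar>) \<in> borel_measurable (restrict_space lborel (ivl R))"
    using assms by measurable
  then have "{x \<in> space (restrict_space lborel (ivl R)). l < ennreal \<bar>f x\<bar>}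
      \<in> sets (restrict_space lborel (ivl R))"
    by measurable
  then show ?thesis using sets_lborel_ivl[of R]
    by (simp add: space_restrict_space) (subst (asm) sets_restrict_space_iff; auto)
qed

lemma rearr_antimono: "s \<le> s' \<Longrightarrow> rearr R g s' \<le> rearr R g s"
  unfolding rearr_def by (rule Inf_superset_mono) (auto intro: order_trans ennreal_leI)

lemma borel_measurable_rearr [measurable]: "rearr R g \<in> borel_measurable lborel"
proof (rule borel_measurableI_greater)
  fix l
  have "is_interval {x. l < rearr R g x}"
    unfolding is_interval_1 by (auto intro: less_le_trans rearr_antimono)
  then show "{x \<in> space lborel. l < rearr R g x} \<in> sets lborel"
    by (simp add: real_interval_borel_measurable)
qed

lemma rearr_le:
  assumes anti: "antimono_on (ivl R) g" and s: "s \<in> ivl R"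
  shows "rearr R g s \<le> g s"
proof (rule dense_ge)
  fix l assume l: "g s < l"
  have "{x \<in> ivl R. l < g x} \<subseteq> {0<..<s}"
  proof
    fix x assume x: "x \<in> {x \<in> ivl R. l < g x}"
    have "x < s"
    proof (rule ccontr)
      assume "\<not> x < s"
      then have "g x \<le> g s" using monotone_onD[OF anti s] x by simp
      with x l show False using less_asym order.strict_trans2 by blast
    qed
    with x show "x \<in> {0<..<s}" by (simp add: mem_ivl_iff)
  qed
  then have "emeasure lborel {x \<in> ivl R. l < g x} \<le> emeasure lborel {0<..<s}"
    by (rule emeasure_mono) simp
  moreover have "emeasure lborel {0<..<s} = ennreal s" using s by (simp add: mem_ivl_iff)
  moreover have "0 < l" using l by (rule le_less_trans[OF zero_le])
  ultimately have "l \<in> {l. 0 < l \<and> emeasure lborel {x \<in> ivl R. l < g x} \<le> ennreal s}"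
    by simp
  then show "rearr R g s \<le> l" unfolding rearr_def by (rule Inf_lower)
qed

lemma le_rearr_of_emeasure_level_set:
  assumes sets: "\<And>l. {x \<in> ivl R. l < g x} \<in> sets lborel"
    and less: "ennreal s < emeasure lborel {x \<in> ivl R. l < g x}"
  shows "l \<le> rearr R g s"
  unfolding rearr_def
proof (rule Inf_greatest, rule ccontr)
  fix l' assume l': "l' \<in> {l. 0 < l \<and> emeasure lborel {x \<in> ivl R. l < g x} \<le> ennreal s}"
    and "\<not> l \<le> l'"
  then have "{x \<in> ivl R. l < g x} \<subseteq> {x \<in> ivl R. l' < g x}" by auto
  then have "emeasure lborel {x \<in> ivl R. l < g x} \<le> emeasure lborel {x \<in> ivl R. l' < g x}"
    using sets by (rule emeasure_mono)
  moreover have "emeasure lborel {x \<in> ivl R. l' < g x} \<le> ennreal s" using l' by simp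
  ultimately show False using less by (meson leD order_trans)
qed

lemma rearr_ge:
  assumes anti: "antimono_on (ivl R) g" and s: "s \<in> ivl R" and x: "0 < x" "x < s"
  shows "g s \<le> rearr R g x"
proof (rule ccontr)
  assume "\<not> g s \<le> rearr R g x"
  then have "rearr R g x < g s" by simp
  then obtain l where l: "rearr R g x < l" "l < g s" using dense by blast
  have "{0<..s} \<subseteq> {y \<in> ivl R. l < g y}"
  proof
    fix y assume y: "y \<in> {0<..s}"
    then have "y \<in> ivl R" using s ivl_downward_closed by simp
    with y have "g s \<le> g y" using monotone_onD[OF anti _ s, of y] by simp
    with l \<open>y \<in> ivl R\<close> show "y \<in> {y \<in> ivl R. l < g y}" using less_le_trans by blast
  qed
  then have "emeasure lborel {0<..s} \<le> emeasure lborel {y \<in> ivl R. l < g y}"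
    by (rule emeasure_mono) (rule sets_lborel_antimono_on_level_set[OF anti])
  moreover have "ennreal x < emeasure lborel {0<..s}"
    using x s by (simp add: mem_ivl_iff ennreal_less_iff)
  ultimately have "ennreal x < emeasure lborel {y \<in> ivl R. l < g y}" by (rule less_le_trans[rotated])
  then have "l \<le> rearr R g x"
    by (rule le_rearr_of_emeasure_level_set[OF sets_lborel_antimono_on_level_set[OF anti]])
  with l(1) show False by simp
qed

lemma less_emeasure_level_set_if_less_rearr:
  assumes "0 < l" "l < rearr R g s"
  shows "ennreal s < emeasure lborel {x \<in> ivl R. l < g x}"
proof (rule ccontr)
  assume "\<not> ennreal s < emeasure lborel {x \<in> ivl R. l < g x}"
  with assms(1) have "rearr R g s \<le> l"
    unfolding rearr_def by (intro Inf_lower) simp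
  with assms(2) show False by simp
qed

definition rearr_avg :: "ereal \<Rightarrow> (real \<Rightarrow> ennreal) \<Rightarrow> real \<Rightarrow> ennreal" where
  "rearr_avg R g t = ennreal (1 / t) * (\<integral>\<^sup>+ s\<in>{0<..<t}. rearr R g s \<partial>lborel)"

lemma fstarstar_eq_rearr_avg: "fstarstar R f = rearr_avg R (\<lambda>x. ennreal \<bar>f x\<bar>)"
  unfolding fstarstar_def rearr_avg_def fstar_def ..

lemma nn_integral_rearr_eq_rearr_avg:
  "0 < t \<Longrightarrow> (\<integral>\<^sup>+ s\<in>{0<..<t}. rearr R g s \<partial>lborel) = ennreal t * rearr_avg R g t"
  unfolding rearr_avg_def by (simp add: ennreal_mult_inverse_cancel)

lemma rearr_le_rearr_avg:
  assumes "0 < t"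
  shows "rearr R g t \<le> rearr_avg R g t"
proof -
  have "ennreal t * rearr R g t = (\<integral>\<^sup>+ s\<in>{0<..<t}. rearr R g t \<partial>lborel)"
    using assms by (simp add: nn_integral_cmult_indicator mult.commute)
  also have "\<dots> \<le> (\<integral>\<^sup>+ s\<in>{0<..<t}. rearr R g s \<partial>lborel)"
    by (intro nn_integral_mono) (auto split: split_indicator intro: rearr_antimono)
  also have "\<dots> = ennreal t * rearr_avg R g t"
    using assms by (rule nn_integral_rearr_eq_rearr_avg)
  finally show ?thesis
    using assms by (simp add: ennreal_mult_le_mult_iff)
qed

lemma rearr_avg_antimono:
  assumes "0 < s" "s \<le> t"
  shows "rearr_avg R g t \<le> rearr_avg R g s"
proof -
  have "ennreal t * rearr_avg R g t
      = (\<integral>\<^sup>+ u. rearr R g u * indicator {0<..<s} u + rearr R g u * indicator {s..<t} u \<partial>lborel)"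
    using assms by (auto simp: nn_integral_rearr_eq_rearr_avg[symmetric] split: split_indicator
        intro!: nn_integral_cong)
  also have "\<dots> = ennreal s * rearr_avg R g s + (\<integral>\<^sup>+ u\<in>{s..<t}. rearr R g u \<partial>lborel)"
    using assms by (simp add: nn_integral_add nn_integral_rearr_eq_rearr_avg)
  also have "(\<integral>\<^sup>+ u\<in>{s..<t}. rearr R g u \<partial>lborel) \<le> (\<integral>\<^sup>+ u\<in>{s..<t}. rearr_avg R g s \<partial>lborel)"
    using assms by (intro nn_integral_mono)
      (auto split: split_indicator intro: order_trans[OF rearr_antimono rearr_le_rearr_avg])
  also have "\<dots> = ennreal (t - s) * rearr_avg R g s"
    using assms by (simp add: nn_integral_cmult_indicator mult.commute)
  also have "ennreal s * rearr_avg R g s + \<dots> = ennreal t * rearr_avg R g s"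
    using assms by (simp add: distrib_right[symmetric] ennreal_plus[symmetric] del: ennreal_plus)
  finally show ?thesis
    using assms by (simp add: ennreal_mult_le_mult_iff add_left_mono)
qed

lemma antimono_on_rearr_avg: "antimono_on (ivl R) (rearr_avg R g)"
  by (auto intro!: monotone_onI rearr_avg_antimono simp: mem_ivl_iff)

lemma ivl_obtain_greater:
  assumes s: "s \<in> ivl R" and m: "ennreal s < m"
  obtains s' where "s < s'" "s' \<in> ivl R" "ennreal s' < m"
proof -
  from s obtain r where r: "ereal s < r" "r < R" using dense by (auto simp: mem_ivl_iff)
  from m obtain w where w: "ennreal s < w" "w < m" using dense by blast
  have r_real: "ereal (real_of_ereal r) = r" using r by (cases r) auto
  have w_real: "w = ennreal (enn2real w)" using w by (cases w) auto
  define s' where "s' = min (real_of_ereal r) (enn2real w)"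
  have "s < real_of_ereal r" using r(1) by (subst (asm) r_real[symmetric]) simp
  moreover have "s < enn2real w" using w(1) s
    by (subst (asm) w_real) (simp add: mem_ivl_iff ennreal_less_iff)
  ultimately have "s < s'" by (simp add: s'_def)
  moreover have "ereal s' < R"
    using r(2) ereal_less_if_le_less[of s' "real_of_ereal r"] by (simp add: s'_def r_real)
  moreover have "ennreal s' < m"
    using w w_real by (metis ennreal_leI le_less_trans min.cobounded2 s'_def)
  ultimately show ?thesis using s that by (simp add: mem_ivl_iff)
qed

text \<open>For \<open>\<lambda> < \<lambda>'\<close> the level set \<open>{g\<^sup>*\<^sup>* > \<lambda>}\<close> contains the interval \<open>(0, |{g > \<lambda>'}|)\<close>,
  because \<open>g\<^sup>*\<^sup>* \<ge> g\<^sup>* \<ge> \<lambda>'\<close> there.\<close>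
lemma rearr_le_rearr_rearr_avg:
  assumes sets: "\<And>l. {x \<in> ivl R. l < g x} \<in> sets lborel" and s: "s \<in> ivl R"
  shows "rearr R g s \<le> rearr R (rearr_avg R g) s"
  unfolding rearr_def[of R "rearr_avg R g"]
proof (rule Inf_greatest, rule ccontr)
  fix l assume "l \<in> {l. 0 < l \<and> emeasure lborel {x \<in> ivl R. l < rearr_avg R g x} \<le> ennreal s}"
    and "\<not> rearr R g s \<le> l"
  then have l: "0 < l" "emeasure lborel {x \<in> ivl R. l < rearr_avg R g x} \<le> ennreal s"
    "l < rearr R g s" by auto
  then obtain l' where l': "l < l'" "l' < rearr R g s" using dense by blast
  with l(1) have "ennreal s < emeasure lborel {x \<in> ivl R. l' < g x}"
    by (intro less_emeasure_level_set_if_less_rearr) simp_all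
  then obtain s' where s': "s < s'" "s' \<in> ivl R" "ennreal s' < emeasure lborel {x \<in> ivl R. l' < g x}"
    by (rule ivl_obtain_greater[OF s])
  have "{0<..<s'} \<subseteq> {x \<in> ivl R. l < rearr_avg R g x}"
  proof
    fix x assume x: "x \<in> {0<..<s'}"
    then have "ennreal x < emeasure lborel {x \<in> ivl R. l' < g x}"
      using s'(3) by (simp add: ennreal_less_iff less_trans[OF _ s'(3)])
    then have "l' \<le> rearr R g x" by (rule le_rearr_of_emeasure_level_set[OF sets])
    also have "\<dots> \<le> rearr_avg R g x" using x by (simp add: rearr_le_rearr_avg)
    finally show "x \<in> {x \<in> ivl R. l < rearr_avg R g x}"
      using x s'(2) l'(1) ivl_downward_closed[of s' R x] by (simp add: less_le_trans)
  qed
  then have "emeasure lborel {0<..<s'} \<le> emeasure lborel {x \<in> ivl R. l < rearr_avg R g x}"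
    by (rule emeasure_mono) (rule sets_lborel_antimono_on_level_set[OF antimono_on_rearr_avg])
  with l(2) s'(1,2) have "ennreal s' \<le> ennreal s" by (simp add: mem_ivl_iff)
  with s s'(1) show False by (simp add: mem_ivl_iff)
qed

section \<open>Quasiconcave functions and the B-condition\<close>

lemma quasiconcave_on_mono:
  "quasiconcave_on R \<phi> \<Longrightarrow> 0 \<le> s \<Longrightarrow> s \<le> t \<Longrightarrow> ereal t < R \<Longrightarrow> \<phi> s \<le> \<phi> t"
  unfolding quasiconcave_on_def by (metis (no_types))

lemma quasiconcave_on_eq_0_iff:
  assumes "quasiconcave_on R \<phi>" "0 \<le> t" "ereal t < R"
  shows "\<phi> t = 0 \<longleftrightarrow> t = 0"
  using assms unfolding quasiconcave_on_def by blast

lemma quasiconcave_on_pos: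
  assumes q: "quasiconcave_on R \<phi>" and t: "t \<in> ivl R"
  shows "0 < \<phi> t"
proof -
  have t: "0 < t" "ereal t < R" using t by (simp_all add: mem_ivl_iff)
  then have "ereal 0 < R" using ereal_less_if_le_less[of 0 t] by simp
  then have "\<phi> 0 = 0" using quasiconcave_on_eq_0_iff[OF q, of 0] by simp
  moreover have "\<phi> 0 \<le> \<phi> t" using t by (intro quasiconcave_on_mono[OF q]) simp_all
  moreover have "\<phi> t \<noteq> 0" using t quasiconcave_on_eq_0_iff[OF q, of t] by simp
  ultimately show ?thesis by simp
qed

lemma quasiconcave_on_ratio:
  assumes q: "quasiconcave_on R \<phi>" and "s \<in> ivl R" "t \<in> ivl R" "s \<le> t"
  shows "\<phi> t * s \<le> \<phi> s * t"
proof -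
  have "\<phi> t / t \<le> \<phi> s / s" using assms unfolding quasiconcave_on_def by (metis (no_types))
  moreover have "0 < s" "0 < t" using assms by (auto simp: mem_ivl_iff)
  ultimately show ?thesis by (simp add: field_simps)
qed

lemma quasiconcave_on_le_double_half:
  assumes q: "quasiconcave_on R \<phi>" and t: "t \<in> ivl R"
  shows "\<phi> t \<le> 2 * \<phi> (t / 2)"
proof -
  have "0 < t" using t by (simp add: mem_ivl_iff)
  then have "t / 2 \<in> ivl R" by (intro ivl_downward_closed[OF t]) auto
  then have "\<phi> t * (t / 2) \<le> \<phi> (t / 2) * t"
    using \<open>0 < t\<close> by (intro quasiconcave_on_ratio[OF q _ t]) simp_all
  then have "(\<phi> t - 2 * \<phi> (t / 2)) * t \<le> 0" by (simp add: algebra_simps)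
  with \<open>0 < t\<close> show ?thesis by (simp add: mult_le_0_iff)
qed

text \<open>Clamping the argument into \<open>[a, b]\<close> makes the test function Borel on all of \<open>\<real>\<close>,
  although \<open>\<rho>\<close> is only monotone on \<open>[0, R)\<close>.\<close>
definition truncated_inverse :: "(real \<Rightarrow> real) \<Rightarrow> real \<Rightarrow> real \<Rightarrow> real \<Rightarrow> real" where
  "truncated_inverse \<rho> a b x = indicator {0<..<b} x / \<rho> (max a (min x b))"

lemma truncated_inverse_inside: "0 < x \<Longrightarrow> x < b \<Longrightarrow> truncated_inverse \<rho> a b x = 1 / \<rho> (max a x)"
  by (simp add: truncated_inverse_def)

lemma truncated_inverse_outside: "\<not> (0 < x \<and> x < b) \<Longrightarrow> truncated_inverse \<rho> a b x = 0"
  by (simp add: truncated_inverse_def)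

lemma abs_truncated_inverse_inside:
  assumes q: "quasiconcave_on R \<rho>" and t: "t \<in> ivl R" and "0 \<le> a" "a < t" "0 < x" "x < t"
  shows "\<bar>truncated_inverse \<rho> a t x\<bar> = 1 / \<rho> (max a x)"
proof -
  have "max a x \<in> ivl R" using assms by (intro ivl_downward_closed[OF t]) auto
  then show ?thesis
    using quasiconcave_on_pos[OF q \<open>max a x \<in> ivl R\<close>] assms(5,6) by (simp add: truncated_inverse_inside)
qed

lemma borel_measurable_truncated_inverse:
  assumes q: "quasiconcave_on R \<rho>" and "0 \<le> a" "a \<le> b" "ereal b < R"
  shows "truncated_inverse \<rho> a b \<in> borel_measurable borel"
proof -
  have "mono (\<lambda>x. \<rho> (max a (min x b)))"
  proof (rule monoI)
    fix x y :: real assume "x \<le> y"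
    moreover have "ereal (max a (min y b)) < R"
      using assms(3,4) ereal_less_if_le_less[of "max a (min y b)" b] by simp
    ultimately show "\<rho> (max a (min x b)) \<le> \<rho> (max a (min y b))"
      using assms(2) by (intro quasiconcave_on_mono[OF q]) auto
  qed
  then have "(\<lambda>x. \<rho> (max a (min x b))) \<in> borel_measurable borel"
    by (rule borel_measurable_mono)
  then show ?thesis
    unfolding truncated_inverse_def by (intro borel_measurable_divide) simp_all
qed

lemma borel_measurable_truncated_inverse_ivl:
  assumes q: "quasiconcave_on R \<rho>" and "0 \<le> a" "a \<le> b" "b \<in> ivl R"
  shows "truncated_inverse \<rho> a b \<in> borel_measurable (restrict_space lborel (ivl R))"
proof -
  have "truncated_inverse \<rho> a b \<in> borel_measurable lborel"
    using borel_measurable_truncated_inverse[OF q assms(2,3)] assms(4) by (simp add: mem_ivl_iff)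
  then show ?thesis by (rule measurable_restrict_space1)
qed

lemma borel_measurable_inverse_indicator:
  assumes q: "quasiconcave_on R \<rho>" and "0 \<le> a" "a \<le> b" "ereal b < R"
  shows "(\<lambda>u. ennreal (1 / \<rho> u) * indicator {a<..<b} u) \<in> borel_measurable lborel"
proof -
  have "(\<lambda>u. ennreal (truncated_inverse \<rho> a b u) * indicator {a<..<b} u) \<in> borel_measurable lborel"
    using borel_measurable_truncated_inverse[OF assms] by simp
  also have "(\<lambda>u. ennreal (truncated_inverse \<rho> a b u) * indicator {a<..<b} u)
      = (\<lambda>u. ennreal (1 / \<rho> u) * indicator {a<..<b} u)"
    using assms(2) by (auto simp: truncated_inverse_inside split: split_indicator)
  finally show ?thesis .
qed

lemma antimono_on_truncated_inverse:
  assumes q: "quasiconcave_on R \<rho>" and ab: "0 \<le> a" "a < b" and b: "b \<in> ivl R"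
  shows "antimono_on (ivl R) (\<lambda>x. ennreal \<bar>truncated_inverse \<rho> a b x\<bar>)"
proof (rule monotone_onI)
  fix x y assume x: "x \<in> ivl R" and y: "y \<in> ivl R" and xy: "x \<le> y"
  show "ennreal \<bar>truncated_inverse \<rho> a b y\<bar> \<le> ennreal \<bar>truncated_inverse \<rho> a b x\<bar>"
  proof (cases "y < b")
    case True
    have "0 < x" using x by (simp add: mem_ivl_iff)
    have ivl: "max a x \<in> ivl R" "max a y \<in> ivl R"
      using ab xy True \<open>0 < x\<close> by (auto intro: ivl_downward_closed[OF b])
    then have "\<rho> (max a x) \<le> \<rho> (max a y)"
      using xy \<open>0 < x\<close> ab by (intro quasiconcave_on_mono[OF q]) (simp_all add: mem_ivl_iff)
    moreover have "0 < \<rho> (max a x)" "0 < \<rho> (max a y)"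
      using ivl by (simp_all add: quasiconcave_on_pos[OF q])
    ultimately have "1 / \<rho> (max a y) \<le> 1 / \<rho> (max a x)"
      by (intro divide_left_mono) simp_all
    moreover have "truncated_inverse \<rho> a b x = 1 / \<rho> (max a x)"
      "truncated_inverse \<rho> a b y = 1 / \<rho> (max a y)"
      using True xy \<open>0 < x\<close> by (simp_all add: truncated_inverse_inside)
    ultimately show ?thesis
      using \<open>0 < \<rho> (max a x)\<close> \<open>0 < \<rho> (max a y)\<close> by (simp add: ennreal_leI)
  next
    case False
    then show ?thesis by (simp add: truncated_inverse_outside)
  qed
qed

lemma B_condition_iff:
  "B_condition R \<phi> \<longleftrightarrow>
     (\<exists>C>0. \<forall>t\<in>ivl R. (\<integral>\<^sup>+ s\<in>{0<..<t}. ennreal (1 / \<phi> s) \<partial>lborel) \<le> ennreal (C * t / \<phi> t))"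
proof -
  have "ennreal (1 / t) * I \<le> ennreal (C / \<phi> t) \<longleftrightarrow> I \<le> ennreal (C * t / \<phi> t)"
    if "t \<in> ivl R" for C t I
  proof -
    have "0 < t" using that by (simp add: mem_ivl_iff)
    then have "ennreal t * ennreal (C / \<phi> t) = ennreal (C * t / \<phi> t)"
      by (simp add: ennreal_mult'[symmetric] mult.commute)
    with \<open>0 < t\<close> show ?thesis by (simp add: ennreal_inverse_mult_le_iff)
  qed
  then show ?thesis unfolding B_condition_def by (meson ex_cong1)
qed

lemma nn_integral_le_mult_integral_inverse:
  assumes q: "quasiconcave_on R \<rho>" and b: "b \<in> ivl R" and "0 \<le> a"
    and bound: "\<And>u. a < u \<Longrightarrow> u < b \<Longrightarrow> ennreal (\<rho> u) * F u \<le> K"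
  shows "(\<integral>\<^sup>+ u\<in>{a<..<b}. F u \<partial>lborel) \<le> K * (\<integral>\<^sup>+ u\<in>{0<..<b}. ennreal (1 / \<rho> u) \<partial>lborel)"
proof -
  have "F u * indicator {a<..<b} u \<le> K * (ennreal (1 / \<rho> u) * indicator {0<..<b} u)" for u
  proof (cases "a < u \<and> u < b")
    case True
    then have "0 < \<rho> u"
      using \<open>0 \<le> a\<close> by (intro quasiconcave_on_pos[OF q] ivl_downward_closed[OF b]) auto
    then have "F u = ennreal (1 / \<rho> u) * (ennreal (\<rho> u) * F u)"
      by (simp add: ennreal_mult_inverse_cancel)
    also have "\<dots> \<le> ennreal (1 / \<rho> u) * K" using True by (intro mult_left_mono bound) auto
    finally show ?thesis using True \<open>0 \<le> a\<close> by (simp add: mult.commute)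
  qed simp
  then have "(\<integral>\<^sup>+ u\<in>{a<..<b}. F u \<partial>lborel)
      \<le> (\<integral>\<^sup>+ u. K * (ennreal (1 / \<rho> u) * indicator {0<..<b} u) \<partial>lborel)"
    by (rule nn_integral_mono)
  also have "\<dots> = K * (\<integral>\<^sup>+ u\<in>{0<..<b}. ennreal (1 / \<rho> u) \<partial>lborel)"
    using b by (intro nn_integral_cmult borel_measurable_inverse_indicator[OF q]) (simp_all add: mem_ivl_iff)
  finally show ?thesis .
qed

lemma nn_integral_inverse_le_half:
  assumes q: "quasiconcave_on R \<phi>" and t: "t \<in> ivl R"
  shows "(\<integral>\<^sup>+ s\<in>{0<..<t}. ennreal (1 / \<phi> s) \<partial>lborel)
    \<le> (\<integral>\<^sup>+ s\<in>{0<..<t/2}. ennreal (1 / \<phi> s) \<partial>lborel) + ennreal (t / \<phi> t)"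
proof -
  have t0: "0 < t" and R: "ereal t < R" using t by (simp_all add: mem_ivl_iff)
  have half: "t / 2 \<in> ivl R" using t0 by (intro ivl_downward_closed[OF t]) auto
  then have "0 < \<phi> (t / 2)" by (rule quasiconcave_on_pos[OF q])
  let ?f = "\<lambda>s. ennreal (1 / \<phi> s)"
  have "(\<integral>\<^sup>+ s\<in>{0<..<t}. ?f s \<partial>lborel)
      \<le> (\<integral>\<^sup>+ s. ?f s * indicator {0<..<t/2} s + ?f s * indicator {t/2<..<t} s \<partial>lborel)"
    by (intro nn_integral_mono_AE eventually_mono[OF AE_lborel_singleton[of "t / 2"]])
      (auto split: split_indicator)
  also have "\<dots> = (\<integral>\<^sup>+ s\<in>{0<..<t/2}. ?f s \<partial>lborel) + (\<integral>\<^sup>+ s\<in>{t/2<..<t}. ?f s \<partial>lborel)"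
    using t0 R ereal_less_if_le_less[of "t / 2" t R]
    by (intro nn_integral_add borel_measurable_inverse_indicator[OF q]) auto
  also have "(\<integral>\<^sup>+ s\<in>{t/2<..<t}. ?f s \<partial>lborel) \<le> (\<integral>\<^sup>+ s\<in>{t/2<..<t}. ?f (t / 2) \<partial>lborel)"
  proof (intro nn_integral_mono)
    fix s
    have "1 / \<phi> s \<le> 1 / \<phi> (t / 2)" if "t / 2 < s" "s < t"
    proof -
      have "s \<in> ivl R" using that t0 by (intro ivl_downward_closed[OF t]) auto
      moreover have "\<phi> (t / 2) \<le> \<phi> s"
        using that R ereal_less_if_le_less[of s t R] by (intro quasiconcave_on_mono[OF q]) auto
      ultimately show ?thesis
        using \<open>0 < \<phi> (t / 2)\<close> by (intro divide_left_mono) (auto intro: quasiconcave_on_pos[OF q])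
    qed
    then show "?f s * indicator {t/2<..<t} s \<le> ?f (t / 2) * indicator {t/2<..<t} s"
      by (auto split: split_indicator intro: ennreal_leI)
  qed
  also have "\<dots> = ennreal (t / 2 / \<phi> (t / 2))"
    using t0 \<open>0 < \<phi> (t / 2)\<close> by (simp add: nn_integral_cmult_indicator ennreal_mult''[symmetric])
  also have "\<dots> \<le> ennreal (t / \<phi> t)"
    using quasiconcave_on_le_double_half[OF q t] quasiconcave_on_pos[OF q t] t0 \<open>0 < \<phi> (t / 2)\<close>
    by (intro ennreal_leI) (simp add: field_simps)
  finally show ?thesis by (simp add: add_left_mono)
qed

lemma B_condition_if_half_integral:
  assumes q: "quasiconcave_on R \<phi>" and "0 < C"
    and half: "\<And>t. t \<in> ivl R \<Longrightarrow>
      (\<integral>\<^sup>+ s\<in>{0<..<t/2}. ennreal (1 / \<phi> s) \<partial>lborel) \<le> ennreal (C * t / \<phi> t)"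
  shows "B_condition R \<phi>"
  unfolding B_condition_iff
proof (intro exI conjI ballI)
  show "0 < C + 1" using \<open>0 < C\<close> by simp
  fix t assume t: "t \<in> ivl R"
  have "(\<integral>\<^sup>+ s\<in>{0<..<t}. ennreal (1 / \<phi> s) \<partial>lborel) \<le> ennreal (C * t / \<phi> t) + ennreal (t / \<phi> t)"
    using nn_integral_inverse_le_half[OF q t] half[OF t] by (meson add_right_mono order_trans)
  also have "\<dots> = ennreal ((C + 1) * t / \<phi> t)"
    using \<open>0 < C\<close> t quasiconcave_on_pos[OF q t]
    by (simp add: ennreal_plus[symmetric] add_divide_distrib distrib_right mem_ivl_iff del: ennreal_plus)
  finally show "(\<integral>\<^sup>+ s\<in>{0<..<t}. ennreal (1 / \<phi> s) \<partial>lborel) \<le> ennreal ((C + 1) * t / \<phi> t)" .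
qed

section \<open>The operators S and T\<close>

lemma S_op_le_iff:
  assumes "quasiconcave_on R \<phi>" "t \<in> ivl R"
  shows "S_op R \<phi> g t \<le> M \<longleftrightarrow> (\<forall>s\<in>{0<..<t}. ennreal (\<phi> s) * rearr R g s \<le> ennreal (\<phi> t) * M)"
  using quasiconcave_on_pos[OF assms] by (simp add: S_op_def ennreal_inverse_mult_le_iff SUP_le_iff)

lemma T_op_le_iff:
  assumes "quasiconcave_on R \<psi>" "t \<in> ivl R"
  shows "T_op R \<psi> g t \<le> M \<longleftrightarrow>
    (\<forall>s. t < s \<and> ereal s < R \<longrightarrow> ennreal (\<psi> s) * rearr R g s \<le> ennreal (\<psi> t) * M)"
  using quasiconcave_on_pos[OF assms] by (simp add: T_op_def ennreal_inverse_mult_le_iff SUP_le_iff)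

lemma weighted_rearr_le_S_op:
  assumes "quasiconcave_on R \<phi>" "t \<in> ivl R" "0 < s" "s < t"
  shows "ennreal (\<phi> s) * rearr R g s \<le> ennreal (\<phi> t) * S_op R \<phi> g t"
  using S_op_le_iff[OF assms(1,2), of g "S_op R \<phi> g t"] assms(3,4) by simp

lemma weighted_rearr_le_T_op:
  assumes "quasiconcave_on R \<psi>" "t \<in> ivl R" "t < s" "ereal s < R"
  shows "ennreal (\<psi> s) * rearr R g s \<le> ennreal (\<psi> t) * T_op R \<psi> g t"
  using T_op_le_iff[OF assms(1,2), of g "T_op R \<psi> g t"] assms(3,4) by simp

lemma ennreal_mult_S_op_mono:
  assumes q: "quasiconcave_on R \<phi>" and "s \<in> ivl R" "t \<in> ivl R" "s \<le> t"
  shows "ennreal (\<phi> s) * S_op R \<phi> g s \<le> ennreal (\<phi> t) * S_op R \<phi> g t"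
  using assms quasiconcave_on_pos[OF q]
  by (auto simp: S_op_def ennreal_mult_inverse_cancel intro!: SUP_subset_mono)

lemma rearr_avg_le_S_op_rearr_avg:
  assumes q: "quasiconcave_on R \<phi>" and t: "t \<in> ivl R"
  shows "ennreal (\<phi> (t / 2)) * rearr_avg R g t \<le> ennreal (\<phi> t) * S_op R \<phi> (rearr_avg R g) t"
proof -
  have "0 < t" using t by (simp add: mem_ivl_iff)
  then have "rearr_avg R g t \<le> rearr R (rearr_avg R g) (t / 2)"
    by (intro rearr_ge[OF antimono_on_rearr_avg t]) simp_all
  then have "ennreal (\<phi> (t / 2)) * rearr_avg R g t \<le> ennreal (\<phi> (t / 2)) * rearr R (rearr_avg R g) (t / 2)"
    by (rule mult_left_mono) simp
  also have "\<dots> \<le> ennreal (\<phi> t) * S_op R \<phi> (rearr_avg R g) t"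
    using \<open>0 < t\<close> by (intro weighted_rearr_le_S_op[OF q t]) simp_all
  finally show ?thesis .
qed

lemma rearr_avg_le_T_op_rearr_avg:
  assumes q: "quasiconcave_on R \<psi>" and t: "t \<in> ivl R" and \<tau>: "0 < \<tau>" "\<tau> < t / 2"
  shows "ennreal (\<psi> (t / 2)) * rearr_avg R g t \<le> ennreal (\<psi> \<tau>) * T_op R \<psi> (rearr_avg R g) \<tau>"
proof -
  have t0: "0 < t" and R: "ereal t < R" using t by (simp_all add: mem_ivl_iff)
  have "\<tau> \<in> ivl R" using \<tau> by (intro ivl_downward_closed[OF t]) auto
  have "rearr_avg R g t \<le> rearr R (rearr_avg R g) (t / 2)"
    using t0 by (intro rearr_ge[OF antimono_on_rearr_avg t]) simp_all
  then have "ennreal (\<psi> (t / 2)) * rearr_avg R g t \<le> ennreal (\<psi> (t / 2)) * rearr R (rearr_avg R g) (t / 2)"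
    by (rule mult_left_mono) simp
  also have "\<dots> \<le> ennreal (\<psi> \<tau>) * T_op R \<psi> (rearr_avg R g) \<tau>"
    using \<tau> R t0 ereal_less_if_le_less[of "t / 2" t R]
    by (intro weighted_rearr_le_T_op[OF q \<open>\<tau> \<in> ivl R\<close>]) simp_all
  finally show ?thesis .
qed

section \<open>Sufficiency of the B-condition\<close>

lemma S_T_le_S_T_rearr_avg:
  assumes sets: "\<And>l. {x \<in> ivl R. l < g x} \<in> sets lborel" and t: "t \<in> ivl R"
  shows "S_op R \<phi> g t + T_op R \<psi> g t \<le> S_op R \<phi> (rearr_avg R g) t + T_op R \<psi> (rearr_avg R g) t"
proof (rule add_mono)
  have "{0<..<t} \<subseteq> ivl R" "{s. t < s \<and> ereal s < R} \<subseteq> ivl R"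
    using t by (auto simp: mem_ivl_iff intro: ivl_downward_closed[OF t])
  then have le: "ennreal (\<rho> s) * rearr R g s \<le> ennreal (\<rho> s) * rearr R (rearr_avg R g) s"
    if "s \<in> {0<..<t} \<union> {s. t < s \<and> ereal s < R}" for \<rho> :: "real \<Rightarrow> real" and s
    using that by (intro mult_left_mono rearr_le_rearr_rearr_avg[OF sets]) auto
  show "S_op R \<phi> g t \<le> S_op R \<phi> (rearr_avg R g) t"
    unfolding S_op_def by (rule mult_left_mono[OF SUP_subset_mono[OF order_refl]]) (use le in auto)
  show "T_op R \<psi> g t \<le> T_op R \<psi> (rearr_avg R g) t"
    unfolding T_op_def by (rule mult_left_mono[OF SUP_subset_mono[OF order_refl]]) (use le in auto)
qed

lemma S_T_abs_le_S_T_fstarstar: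
  assumes "f \<in> borel_measurable (restrict_space lborel (ivl R))" "t \<in> ivl R"
  shows "S_op R \<phi> (\<lambda>x. ennreal \<bar>f x\<bar>) t + T_op R \<psi> (\<lambda>x. ennreal \<bar>f x\<bar>) t
    \<le> S_op R \<phi> (fstarstar R f) t + T_op R \<psi> (fstarstar R f) t"
  unfolding fstarstar_eq_rearr_avg by (rule S_T_le_S_T_rearr_avg[OF sets_level_set_abs[OF assms(1)] assms(2)])

lemma rearr_avg_le_S_op:
  assumes q: "quasiconcave_on R \<phi>" and "0 \<le> A"
    and B: "\<And>t. t \<in> ivl R \<Longrightarrow>
      (\<integral>\<^sup>+ s\<in>{0<..<t}. ennreal (1 / \<phi> s) \<partial>lborel) \<le> ennreal (A * t / \<phi> t)"
    and t: "t \<in> ivl R"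
  shows "rearr_avg R g t \<le> ennreal A * S_op R \<phi> g t"
proof -
  have t0: "0 < t" using t by (simp add: mem_ivl_iff)
  have pos: "0 < \<phi> t" by (rule quasiconcave_on_pos[OF q t])
  define M where "M = ennreal (\<phi> t) * S_op R \<phi> g t"
  have "ennreal (\<phi> u) * rearr R g u \<le> M" if "0 < u" "u < t" for u
    using weighted_rearr_le_S_op[OF q t that] by (simp add: M_def)
  then have "ennreal t * rearr_avg R g t \<le> M * (\<integral>\<^sup>+ s\<in>{0<..<t}. ennreal (1 / \<phi> s) \<partial>lborel)"
    using nn_integral_le_mult_integral_inverse[OF q t, of 0 "rearr R g" M]
    by (simp add: nn_integral_rearr_eq_rearr_avg[OF t0, symmetric])
  also have "\<dots> \<le> M * ennreal (A * t / \<phi> t)" by (intro mult_left_mono B t) simp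
  also have "\<dots> = S_op R \<phi> g t * (ennreal (\<phi> t) * ennreal (A * t / \<phi> t))"
    by (simp add: M_def ac_simps)
  also have "ennreal (\<phi> t) * ennreal (A * t / \<phi> t) = ennreal t * ennreal A"
    using pos \<open>0 \<le> A\<close> t0 by (simp add: ennreal_mult_divide_cancel ennreal_mult mult.commute)
  also have "S_op R \<phi> g t * (ennreal t * ennreal A) = ennreal t * (ennreal A * S_op R \<phi> g t)"
    by (simp add: ac_simps)
  finally show ?thesis using t0 by (simp add: ennreal_mult_le_mult_iff)
qed

lemma S_op_rearr_avg_le:
  assumes q: "quasiconcave_on R \<phi>" and "0 \<le> A"
    and B: "\<And>t. t \<in> ivl R \<Longrightarrow>
      (\<integral>\<^sup>+ s\<in>{0<..<t}. ennreal (1 / \<phi> s) \<partial>lborel) \<le> ennreal (A * t / \<phi> t)"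
    and t: "t \<in> ivl R"
  shows "S_op R \<phi> (rearr_avg R g) t \<le> ennreal A * S_op R \<phi> g t"
  unfolding S_op_le_iff[OF q t]
proof
  fix s assume "s \<in> {0<..<t}"
  then have s: "s \<in> ivl R" "s \<le> t" by (auto intro: ivl_downward_closed[OF t])
  have "ennreal (\<phi> s) * rearr R (rearr_avg R g) s \<le> ennreal (\<phi> s) * rearr_avg R g s"
    by (intro mult_left_mono rearr_le[OF antimono_on_rearr_avg s(1)]) simp
  also have "\<dots> \<le> ennreal (\<phi> s) * (ennreal A * S_op R \<phi> g s)"
    using rearr_avg_le_S_op[OF q \<open>0 \<le> A\<close> B s(1)] by (simp add: mult_left_mono)
  also have "\<dots> = ennreal A * (ennreal (\<phi> s) * S_op R \<phi> g s)" by (simp add: ac_simps)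
  also have "\<dots> \<le> ennreal A * (ennreal (\<phi> t) * S_op R \<phi> g t)"
    by (intro mult_left_mono ennreal_mult_S_op_mono[OF q s(1) t s(2)]) simp
  finally show "ennreal (\<phi> s) * rearr R (rearr_avg R g) s \<le> ennreal (\<phi> t) * (ennreal A * S_op R \<phi> g t)"
    by (simp add: ac_simps)
qed

lemma rearr_avg_mult_le_T_op_tail:
  assumes q: "quasiconcave_on R \<psi>"
    and B: "\<And>t. t \<in> ivl R \<Longrightarrow>
      (\<integral>\<^sup>+ s\<in>{0<..<t}. ennreal (1 / \<psi> s) \<partial>lborel) \<le> ennreal (B * t / \<psi> t)"
    and t: "t \<in> ivl R" and s: "s \<in> ivl R" and "t < s"
  shows "ennreal s * rearr_avg R g s
    \<le> ennreal t * rearr_avg R g t + ennreal (\<psi> t) * T_op R \<psi> g t * ennreal (B * s / \<psi> s)"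
proof -
  have t0: "0 < t" and s0: "0 < s" using t s by (simp_all add: mem_ivl_iff)
  have "ennreal s * rearr_avg R g s
      \<le> (\<integral>\<^sup>+ u. rearr R g u * indicator {0<..<t} u + rearr R g u * indicator {t<..<s} u \<partial>lborel)"
    unfolding nn_integral_rearr_eq_rearr_avg[OF s0, symmetric] using t0
    by (intro nn_integral_mono_AE eventually_mono[OF AE_lborel_singleton[of t]])
      (auto split: split_indicator)
  also have "\<dots> = ennreal t * rearr_avg R g t + (\<integral>\<^sup>+ u\<in>{t<..<s}. rearr R g u \<partial>lborel)"
    using t0 by (simp add: nn_integral_add nn_integral_rearr_eq_rearr_avg)
  also have "(\<integral>\<^sup>+ u\<in>{t<..<s}. rearr R g u \<partial>lborel)
      \<le> ennreal (\<psi> t) * T_op R \<psi> g t * (\<integral>\<^sup>+ u\<in>{0<..<s}. ennreal (1 / \<psi> u) \<partial>lborel)"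
  proof (rule nn_integral_le_mult_integral_inverse[OF q s])
    fix u assume "t < u" "u < s"
    then show "ennreal (\<psi> u) * rearr R g u \<le> ennreal (\<psi> t) * T_op R \<psi> g t"
      using s ereal_less_if_le_less[of u s R] by (intro weighted_rearr_le_T_op[OF q t]) (simp_all add: mem_ivl_iff)
  qed (use t0 in simp)
  also have "\<dots> \<le> ennreal (\<psi> t) * T_op R \<psi> g t * ennreal (B * s / \<psi> s)"
    by (intro mult_left_mono B s) simp
  finally show ?thesis by (simp add: add_left_mono)
qed

text \<open>Split the integral of \<open>g\<^sup>*\<close> over \<open>(0, s)\<close> at \<open>t\<close>: the tail is controlled by \<open>T\<^sub>\<psi> g t\<close> and
  the B-condition for \<open>\<psi>\<close>, the rest by \<open>g\<^sup>*\<^sup>* t\<close> since \<open>\<psi> s \<cdot> t / s \<le> \<psi> t\<close>.\<close>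
lemma T_op_rearr_avg_le:
  assumes q: "quasiconcave_on R \<psi>" and "0 \<le> B"
    and B: "\<And>t. t \<in> ivl R \<Longrightarrow>
      (\<integral>\<^sup>+ s\<in>{0<..<t}. ennreal (1 / \<psi> s) \<partial>lborel) \<le> ennreal (B * t / \<psi> t)"
    and t: "t \<in> ivl R"
  shows "T_op R \<psi> (rearr_avg R g) t \<le> rearr_avg R g t + ennreal B * T_op R \<psi> g t"
  unfolding T_op_le_iff[OF q t]
proof (intro allI impI)
  fix s assume "t < s \<and> ereal s < R"
  then have ts: "t < s" and s: "s \<in> ivl R" using t by (auto simp: mem_ivl_iff)
  have t0: "0 < t" and s0: "0 < s" using t s by (simp_all add: mem_ivl_iff)
  have pos: "0 < \<psi> s" by (rule quasiconcave_on_pos[OF q s])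
  define M where "M = ennreal (\<psi> t) * T_op R \<psi> g t"
  have "ennreal s * (ennreal (\<psi> s) * rearr R (rearr_avg R g) s)
      \<le> ennreal (\<psi> s) * (ennreal s * rearr_avg R g s)"
    using rearr_le[OF antimono_on_rearr_avg s] by (simp add: mult_left_mono ac_simps)
  also have "\<dots> \<le> ennreal (\<psi> s) * (ennreal t * rearr_avg R g t + M * ennreal (B * s / \<psi> s))"
    using rearr_avg_mult_le_T_op_tail[OF q B t s ts] by (simp add: M_def mult_left_mono)
  also have "\<dots> = (ennreal (\<psi> s) * ennreal t) * rearr_avg R g t
      + M * (ennreal (\<psi> s) * ennreal (B * s / \<psi> s))"
    by (simp add: distrib_left ac_simps)
  also have "ennreal (\<psi> s) * ennreal t = ennreal (\<psi> s * t)"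
    using t0 by (simp add: ennreal_mult'')
  also have "ennreal (\<psi> s) * ennreal (B * s / \<psi> s) = ennreal s * ennreal B"
    using pos s0 \<open>0 \<le> B\<close> by (simp add: ennreal_mult_divide_cancel ennreal_mult mult.commute)
  also have "ennreal (\<psi> s * t) * rearr_avg R g t + M * (ennreal s * ennreal B)
      \<le> ennreal (s * \<psi> t) * rearr_avg R g t + M * (ennreal s * ennreal B)"
    using quasiconcave_on_ratio[OF q t s] ts
    by (intro add_right_mono mult_right_mono ennreal_leI) (auto simp: mult.commute)
  also have "\<dots> = ennreal s * (ennreal (\<psi> t) * (rearr_avg R g t + ennreal B * T_op R \<psi> g t))"
    using s0 by (simp add: M_def ennreal_mult' distrib_left ac_simps)
  finally show "ennreal (\<psi> s) * rearr R (rearr_avg R g) s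
      \<le> ennreal (\<psi> t) * (rearr_avg R g t + ennreal B * T_op R \<psi> g t)"
    using s0 by (subst (asm) ennreal_mult_le_mult_iff) auto
qed

lemma S_T_rearr_avg_le:
  assumes q\<phi>: "quasiconcave_on R \<phi>" and q\<psi>: "quasiconcave_on R \<psi>" and "0 \<le> A" "0 \<le> B"
    and B\<phi>: "\<And>t. t \<in> ivl R \<Longrightarrow>
      (\<integral>\<^sup>+ s\<in>{0<..<t}. ennreal (1 / \<phi> s) \<partial>lborel) \<le> ennreal (A * t / \<phi> t)"
    and B\<psi>: "\<And>t. t \<in> ivl R \<Longrightarrow>
      (\<integral>\<^sup>+ s\<in>{0<..<t}. ennreal (1 / \<psi> s) \<partial>lborel) \<le> ennreal (B * t / \<psi> t)"
    and t: "t \<in> ivl R"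
  shows "S_op R \<phi> (rearr_avg R g) t + T_op R \<psi> (rearr_avg R g) t
    \<le> ennreal (2 * A + B) * (S_op R \<phi> g t + T_op R \<psi> g t)"
proof -
  let ?S = "S_op R \<phi> g t" and ?T = "T_op R \<psi> g t"
  have two: "ennreal (2 * A) = ennreal A + ennreal A"
    using \<open>0 \<le> A\<close> by (metis mult_2 ennreal_plus)
  have "S_op R \<phi> (rearr_avg R g) t + T_op R \<psi> (rearr_avg R g) t
      \<le> ennreal A * ?S + (rearr_avg R g t + ennreal B * ?T)"
    by (rule add_mono[OF S_op_rearr_avg_le[OF q\<phi> \<open>0 \<le> A\<close> B\<phi> t] T_op_rearr_avg_le[OF q\<psi> \<open>0 \<le> B\<close> B\<psi> t]])
  also have "\<dots> \<le> ennreal A * ?S + (ennreal A * ?S + ennreal B * ?T)"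
    using rearr_avg_le_S_op[OF q\<phi> \<open>0 \<le> A\<close> B\<phi> t] by (simp add: add_left_mono add_right_mono)
  also have "\<dots> = ennreal (2 * A) * ?S + ennreal B * ?T"
    unfolding two by (simp add: distrib_left distrib_right ac_simps)
  also have "\<dots> \<le> ennreal (2 * A + B) * ?S + ennreal (2 * A + B) * ?T"
    using \<open>0 \<le> A\<close> \<open>0 \<le> B\<close> by (intro add_mono mult_right_mono ennreal_leI) auto
  finally show ?thesis by (simp add: distrib_left)
qed

definition ST_upper_estimate :: "ereal \<Rightarrow> (real \<Rightarrow> real) \<Rightarrow> (real \<Rightarrow> real) \<Rightarrow> real \<Rightarrow> bool" where
  "ST_upper_estimate R \<phi> \<psi> C \<longleftrightarrow>
    (\<forall>f :: real \<Rightarrow> real. f \<in> borel_measurable (restrict_space lborel (ivl R)) \<longrightarrow>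
      (\<forall>t\<in>ivl R. S_op R \<phi> (fstarstar R f) t + T_op R \<psi> (fstarstar R f) t
        \<le> ennreal C * (S_op R \<phi> (\<lambda>x. ennreal \<bar>f x\<bar>) t + T_op R \<psi> (\<lambda>x. ennreal \<bar>f x\<bar>) t)))"

lemma ST_upper_estimateD:
  assumes "ST_upper_estimate R \<phi> \<psi> C" "f \<in> borel_measurable (restrict_space lborel (ivl R))" "t \<in> ivl R"
  shows "S_op R \<phi> (rearr_avg R (\<lambda>x. ennreal \<bar>f x\<bar>)) t + T_op R \<psi> (rearr_avg R (\<lambda>x. ennreal \<bar>f x\<bar>)) t
    \<le> ennreal C * (S_op R \<phi> (\<lambda>x. ennreal \<bar>f x\<bar>) t + T_op R \<psi> (\<lambda>x. ennreal \<bar>f x\<bar>) t)"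
  using assms unfolding ST_upper_estimate_def fstarstar_eq_rearr_avg by blast

lemma ST_upper_estimate_if_B_condition:
  assumes q\<phi>: "quasiconcave_on R \<phi>" and q\<psi>: "quasiconcave_on R \<psi>"
    and "B_condition R \<phi>" "B_condition R \<psi>"
  obtains C where "1 \<le> C" "ST_upper_estimate R \<phi> \<psi> C"
proof -
  obtain A B where "0 < A" "0 < B"
    and B\<phi>: "\<forall>t\<in>ivl R. (\<integral>\<^sup>+ s\<in>{0<..<t}. ennreal (1 / \<phi> s) \<partial>lborel) \<le> ennreal (A * t / \<phi> t)"
    and B\<psi>: "\<forall>t\<in>ivl R. (\<integral>\<^sup>+ s\<in>{0<..<t}. ennreal (1 / \<psi> s) \<partial>lborel) \<le> ennreal (B * t / \<psi> t)"
    using assms(3,4) unfolding B_condition_iff by blast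
  have "S_op R \<phi> (rearr_avg R g) t + T_op R \<psi> (rearr_avg R g) t
      \<le> ennreal (2 * A + B + 1) * (S_op R \<phi> g t + T_op R \<psi> g t)" if "t \<in> ivl R" for g t
  proof -
    have "ennreal (2 * A + B) \<le> ennreal (2 * A + B + 1)" by (rule ennreal_leI) simp
    with S_T_rearr_avg_le[OF q\<phi> q\<psi> _ _ B\<phi>[rule_format] B\<psi>[rule_format] that, of g] \<open>0 < A\<close> \<open>0 < B\<close>
    show ?thesis by (auto intro: order_trans[OF _ mult_right_mono])
  qed
  then have "ST_upper_estimate R \<phi> \<psi> (2 * A + B + 1)"
    by (simp add: ST_upper_estimate_def fstarstar_eq_rearr_avg)
  with \<open>0 < A\<close> \<open>0 < B\<close> show thesis by (intro that) simp_all
qed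

section \<open>Necessity of the B-condition\<close>

text \<open>For the test function \<open>g\<close>: \<open>1 / \<rho> u \<le> 2 / \<rho> (2 u) = 2 g (2 u) \<le> 2 g\<^sup>* u\<close>.\<close>
lemma nn_integral_inverse_le_fstarstar_truncated_inverse:
  assumes q: "quasiconcave_on R \<rho>" and t: "t \<in> ivl R" and "0 \<le> a" "a < t"
  shows "(\<integral>\<^sup>+ u\<in>{a<..<t/2}. ennreal (1 / \<rho> u) \<partial>lborel)
    \<le> 2 * (ennreal t * fstarstar R (truncated_inverse \<rho> a t) t)"
proof -
  define g where "g = (\<lambda>x. ennreal \<bar>truncated_inverse \<rho> a t x\<bar>)"
  have anti: "antimono_on (ivl R) g"
    unfolding g_def using \<open>0 \<le> a\<close> \<open>a < t\<close> t by (rule antimono_on_truncated_inverse[OF q])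
  have t0: "0 < t" using t by (simp add: mem_ivl_iff)
  have "ennreal (1 / \<rho> u) * indicator {a<..<t/2} u \<le> 2 * (rearr R g u * indicator {0<..<t} u)" for u
  proof (cases "a < u \<and> u < t / 2")
    case True
    then have u: "0 < u" "u < t" "u \<in> ivl R" "2 * u \<in> ivl R"
      using \<open>0 \<le> a\<close> by (auto intro!: ivl_downward_closed[OF t])
    have "\<rho> (2 * u) \<le> 2 * \<rho> u" using quasiconcave_on_le_double_half[OF q u(4)] by simp
    then have "1 / \<rho> u \<le> 2 * (1 / \<rho> (2 * u))"
      using quasiconcave_on_pos[OF q u(3)] quasiconcave_on_pos[OF q u(4)] by (simp add: field_simps)
    also have "1 / \<rho> (2 * u) = \<bar>truncated_inverse \<rho> a t (2 * u)\<bar>"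
      using True \<open>0 \<le> a\<close> by (subst abs_truncated_inverse_inside[OF q t]) auto
    finally have "ennreal (1 / \<rho> u) \<le> ennreal (2 * \<bar>truncated_inverse \<rho> a t (2 * u)\<bar>)"
      by (rule ennreal_leI)
    also have "\<dots> = 2 * g (2 * u)" unfolding g_def by (simp add: ennreal_mult)
    also have "g (2 * u) \<le> rearr R g u" using u by (intro rearr_ge[OF anti u(4)]) auto
    finally show ?thesis using True u by (simp add: mult_left_mono)
  qed simp
  then have "(\<integral>\<^sup>+ u\<in>{a<..<t/2}. ennreal (1 / \<rho> u) \<partial>lborel)
      \<le> (\<integral>\<^sup>+ u. 2 * (rearr R g u * indicator {0<..<t} u) \<partial>lborel)"
    by (rule nn_integral_mono)
  also have "\<dots> = 2 * (ennreal t * fstarstar R (truncated_inverse \<rho> a t) t)"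
    using t0 by (simp add: nn_integral_cmult nn_integral_rearr_eq_rearr_avg fstarstar_eq_rearr_avg g_def)
  finally show ?thesis .
qed

lemma integral_inverse_le_if_test_bound:
  assumes q: "quasiconcave_on R \<rho>" and t: "t \<in> ivl R" and "0 \<le> a" "a < t" and "0 \<le> M"
    and bound: "ennreal (\<rho> (t / 2)) * fstarstar R (truncated_inverse \<rho> a t) t \<le> ennreal M"
  shows "(\<integral>\<^sup>+ u\<in>{a<..<t/2}. ennreal (1 / \<rho> u) \<partial>lborel) \<le> ennreal (4 * M * t / \<rho> t)"
proof -
  have t0: "0 < t" using t by (simp add: mem_ivl_iff)
  have pos: "0 < \<rho> t" "0 < \<rho> (t / 2)"
    using t0 by (auto intro!: quasiconcave_on_pos[OF q] ivl_downward_closed[OF t])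
  have "ennreal (\<rho> t) * (\<integral>\<^sup>+ u\<in>{a<..<t/2}. ennreal (1 / \<rho> u) \<partial>lborel)
      \<le> ennreal (\<rho> t) * (2 * (ennreal t * fstarstar R (truncated_inverse \<rho> a t) t))"
    using nn_integral_inverse_le_fstarstar_truncated_inverse[OF q t \<open>0 \<le> a\<close> \<open>a < t\<close>]
    by (rule mult_left_mono) simp
  also have "\<dots> \<le> (2 * ennreal (\<rho> (t / 2))) * (2 * (ennreal t * fstarstar R (truncated_inverse \<rho> a t) t))"
  proof (rule mult_right_mono)
    have "ennreal (\<rho> t) \<le> ennreal (2 * \<rho> (t / 2))"
      using quasiconcave_on_le_double_half[OF q t] by (rule ennreal_leI)
    then show "ennreal (\<rho> t) \<le> 2 * ennreal (\<rho> (t / 2))" by (simp add: ennreal_mult')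
  qed simp
  also have "\<dots> = 4 * ennreal t * (ennreal (\<rho> (t / 2)) * fstarstar R (truncated_inverse \<rho> a t) t)"
    by (simp add: ac_simps)
  also have "\<dots> \<le> 4 * ennreal t * ennreal M" using bound by (rule mult_left_mono) simp
  also have "\<dots> = ennreal (\<rho> t) * ennreal (4 * M * t / \<rho> t)"
    using pos t0 \<open>0 \<le> M\<close> by (simp add: ennreal_mult_divide_cancel ennreal_mult ac_simps)
  finally show ?thesis using pos by (simp add: ennreal_mult_le_mult_iff)
qed

lemma S_op_truncated_inverse_le:
  assumes q: "quasiconcave_on R \<phi>" and t: "t \<in> ivl R"
  shows "S_op R \<phi> (\<lambda>x. ennreal \<bar>truncated_inverse \<phi> 0 t x\<bar>) t \<le> ennreal (1 / \<phi> t)"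
  unfolding S_op_le_iff[OF q t]
proof
  fix s assume s: "s \<in> {0<..<t}"
  then have "s \<in> ivl R" by (auto intro: ivl_downward_closed[OF t])
  have "0 < t" using t by (simp add: mem_ivl_iff)
  then have "rearr R (\<lambda>x. ennreal \<bar>truncated_inverse \<phi> 0 t x\<bar>) s \<le> ennreal (1 / \<phi> s)"
    using rearr_le[OF antimono_on_truncated_inverse[OF q order_refl \<open>0 < t\<close> t] \<open>s \<in> ivl R\<close>] s
      abs_truncated_inverse_inside[OF q t order_refl \<open>0 < t\<close>, of s]
    by simp
  then have "ennreal (\<phi> s) * rearr R (\<lambda>x. ennreal \<bar>truncated_inverse \<phi> 0 t x\<bar>) s
      \<le> ennreal (\<phi> s) * ennreal (1 / \<phi> s)"
    by (rule mult_left_mono) simp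
  also have "\<dots> = ennreal (\<phi> t) * ennreal (1 / \<phi> t)"
    using quasiconcave_on_pos[OF q \<open>s \<in> ivl R\<close>] quasiconcave_on_pos[OF q t]
    by (simp add: ennreal_mult_divide_cancel)
  finally show "ennreal (\<phi> s) * rearr R (\<lambda>x. ennreal \<bar>truncated_inverse \<phi> 0 t x\<bar>) s
      \<le> ennreal (\<phi> t) * ennreal (1 / \<phi> t)" .
qed

lemma T_op_truncated_inverse_eq_0:
  assumes q: "quasiconcave_on R \<rho>" and t: "t \<in> ivl R" and "0 \<le> a" "a < t"
  shows "T_op R \<psi> (\<lambda>x. ennreal \<bar>truncated_inverse \<rho> a t x\<bar>) t = 0"
proof -
  have "rearr R (\<lambda>x. ennreal \<bar>truncated_inverse \<rho> a t x\<bar>) s = 0" if "t < s" "ereal s < R" for s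
    using rearr_le[OF antimono_on_truncated_inverse[OF q assms(3,4) t], of s] that t
    by (simp add: mem_ivl_iff truncated_inverse_outside)
  then show ?thesis by (simp add: T_op_def SUP_constant bot_ennreal)
qed

lemma S_op_truncated_inverse_at_le:
  assumes q\<phi>: "quasiconcave_on R \<phi>" and q\<rho>: "quasiconcave_on R \<rho>" and t: "t \<in> ivl R"
    and \<tau>: "0 < \<tau>" "\<tau> < t"
  shows "S_op R \<phi> (\<lambda>x. ennreal \<bar>truncated_inverse \<rho> \<tau> t x\<bar>) \<tau> \<le> ennreal (1 / \<rho> \<tau>)"
proof -
  have \<tau>_ivl: "\<tau> \<in> ivl R" using \<tau> by (intro ivl_downward_closed[OF t]) auto
  show ?thesis unfolding S_op_le_iff[OF q\<phi> \<tau>_ivl]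
  proof
    fix s assume s: "s \<in> {0<..<\<tau>}"
    then have "s \<in> ivl R" by (auto intro: ivl_downward_closed[OF \<tau>_ivl])
    then have "rearr R (\<lambda>x. ennreal \<bar>truncated_inverse \<rho> \<tau> t x\<bar>) s \<le> ennreal (1 / \<rho> \<tau>)"
      using rearr_le[OF antimono_on_truncated_inverse[OF q\<rho> less_imp_le[OF \<tau>(1)] \<tau>(2) t] \<open>s \<in> ivl R\<close>] s
        abs_truncated_inverse_inside[OF q\<rho> t less_imp_le[OF \<tau>(1)] \<tau>(2), of s] \<tau>(2)
      by simp
    moreover have "ennreal (\<phi> s) \<le> ennreal (\<phi> \<tau>)"
      using s \<tau>_ivl by (intro ennreal_leI quasiconcave_on_mono[OF q\<phi>]) (simp_all add: mem_ivl_iff)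
    ultimately show "ennreal (\<phi> s) * rearr R (\<lambda>x. ennreal \<bar>truncated_inverse \<rho> \<tau> t x\<bar>) s
        \<le> ennreal (\<phi> \<tau>) * ennreal (1 / \<rho> \<tau>)"
      by (intro mult_mono) simp_all
  qed
qed

lemma T_op_truncated_inverse_at_le:
  assumes q: "quasiconcave_on R \<rho>" and t: "t \<in> ivl R" and \<tau>: "0 < \<tau>" "\<tau> < t"
  shows "T_op R \<rho> (\<lambda>x. ennreal \<bar>truncated_inverse \<rho> \<tau> t x\<bar>) \<tau> \<le> ennreal (1 / \<rho> \<tau>)"
proof -
  have \<tau>_ivl: "\<tau> \<in> ivl R" using \<tau> by (intro ivl_downward_closed[OF t]) auto
  show ?thesis unfolding T_op_le_iff[OF q \<tau>_ivl]
  proof (intro allI impI)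
    fix s assume "\<tau> < s \<and> ereal s < R"
    then have s: "\<tau> < s" "s \<in> ivl R" using \<tau> by (auto simp: mem_ivl_iff)
    have "ennreal (\<rho> s) * rearr R (\<lambda>x. ennreal \<bar>truncated_inverse \<rho> \<tau> t x\<bar>) s
        \<le> ennreal (\<rho> s) * ennreal \<bar>truncated_inverse \<rho> \<tau> t s\<bar>"
      using rearr_le[OF antimono_on_truncated_inverse[OF q _ \<tau>(2) t] s(2)] \<tau>
      by (intro mult_left_mono) simp_all
    also have "\<dots> \<le> 1"
    proof (cases "s < t")
      case True
      then show ?thesis using s \<tau> quasiconcave_on_pos[OF q s(2)]
        by (simp add: abs_truncated_inverse_inside[OF q t] ennreal_mult_divide_cancel)
    qed (simp add: truncated_inverse_outside)
    also have "\<dots> = ennreal (\<rho> \<tau>) * ennreal (1 / \<rho> \<tau>)"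
      using quasiconcave_on_pos[OF q \<tau>_ivl] by (simp add: ennreal_mult_divide_cancel)
    finally show "ennreal (\<rho> s) * rearr R (\<lambda>x. ennreal \<bar>truncated_inverse \<rho> \<tau> t x\<bar>) s
        \<le> ennreal (\<rho> \<tau>) * ennreal (1 / \<rho> \<tau>)" .
  qed
qed

lemma B_condition_left_if_ST_upper_estimate:
  assumes q: "quasiconcave_on R \<phi>" and "0 < C" and U: "ST_upper_estimate R \<phi> \<psi> C"
  shows "B_condition R \<phi>"
proof (rule B_condition_if_half_integral[OF q])
  show "0 < 4 * C" using \<open>0 < C\<close> by simp
  fix t assume t: "t \<in> ivl R"
  have t0: "0 < t" and pos: "0 < \<phi> t" using t quasiconcave_on_pos[OF q t] by (simp_all add: mem_ivl_iff)
  define f where "f = truncated_inverse \<phi> 0 t"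
  define g where "g = (\<lambda>x. ennreal \<bar>f x\<bar>)"
  have f: "f \<in> borel_measurable (restrict_space lborel (ivl R))"
    unfolding f_def using t0 by (intro borel_measurable_truncated_inverse_ivl[OF q _ _ t]) simp_all
  have "S_op R \<phi> (rearr_avg R g) t \<le> S_op R \<phi> (rearr_avg R g) t + T_op R \<psi> (rearr_avg R g) t"
    by (simp add: add_increasing2)
  also have "\<dots> \<le> ennreal C * (S_op R \<phi> g t + T_op R \<psi> g t)"
    unfolding g_def by (rule ST_upper_estimateD[OF U f t])
  also have "\<dots> \<le> ennreal C * ennreal (1 / \<phi> t)"
    using S_op_truncated_inverse_le[OF q t] T_op_truncated_inverse_eq_0[OF q t _ t0]
    by (simp add: g_def f_def mult_left_mono)
  finally have "ennreal (\<phi> t) * S_op R \<phi> (rearr_avg R g) t \<le> ennreal (\<phi> t) * (ennreal C * ennreal (1 / \<phi> t))"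
    by (rule mult_left_mono) simp
  with rearr_avg_le_S_op_rearr_avg[OF q t, of g]
  have "ennreal (\<phi> (t / 2)) * fstarstar R f t \<le> ennreal (\<phi> t) * (ennreal C * ennreal (1 / \<phi> t))"
    unfolding fstarstar_eq_rearr_avg g_def[symmetric] by (rule order_trans)
  also have "\<dots> = ennreal C" using pos by (simp add: ennreal_mult_divide_cancel mult.left_commute)
  finally show "(\<integral>\<^sup>+ s\<in>{0<..<t/2}. ennreal (1 / \<phi> s) \<partial>lborel) \<le> ennreal (4 * C * t / \<phi> t)"
    unfolding f_def using t0 \<open>0 < C\<close> by (intro integral_inverse_le_if_test_bound[OF q t]) simp_all
qed

lemma integral_inverse_tail_le_if_ST_upper_estimate:
  assumes q\<phi>: "quasiconcave_on R \<phi>" and q\<psi>: "quasiconcave_on R \<psi>" and "0 < C"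
    and U: "ST_upper_estimate R \<phi> \<psi> C" and t: "t \<in> ivl R" and \<tau>: "0 < \<tau>" "\<tau> < t / 2"
  shows "(\<integral>\<^sup>+ u\<in>{\<tau><..<t/2}. ennreal (1 / \<psi> u) \<partial>lborel) \<le> ennreal (8 * C * t / \<psi> t)"
proof -
  have \<tau>_ivl: "\<tau> \<in> ivl R" using \<tau> by (intro ivl_downward_closed[OF t]) auto
  have pos: "0 < \<psi> \<tau>" by (rule quasiconcave_on_pos[OF q\<psi> \<tau>_ivl])
  have "\<tau> < t" using \<tau> by simp
  define f where "f = truncated_inverse \<psi> \<tau> t"
  define g where "g = (\<lambda>x. ennreal \<bar>f x\<bar>)"
  have f: "f \<in> borel_measurable (restrict_space lborel (ivl R))"
    unfolding f_def using \<tau> by (intro borel_measurable_truncated_inverse_ivl[OF q\<psi> _ _ t]) simp_all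
  have "T_op R \<psi> (rearr_avg R g) \<tau> \<le> S_op R \<phi> (rearr_avg R g) \<tau> + T_op R \<psi> (rearr_avg R g) \<tau>"
    by (simp add: add_increasing)
  also have "\<dots> \<le> ennreal C * (S_op R \<phi> g \<tau> + T_op R \<psi> g \<tau>)"
    unfolding g_def by (rule ST_upper_estimateD[OF U f \<tau>_ivl])
  also have "\<dots> \<le> ennreal C * (ennreal (1 / \<psi> \<tau>) + ennreal (1 / \<psi> \<tau>))"
    unfolding g_def f_def
    by (intro mult_left_mono add_mono S_op_truncated_inverse_at_le[OF q\<phi> q\<psi> t \<tau>(1) \<open>\<tau> < t\<close>]
        T_op_truncated_inverse_at_le[OF q\<psi> t \<tau>(1) \<open>\<tau> < t\<close>]) simp
  also have "ennreal (1 / \<psi> \<tau>) + ennreal (1 / \<psi> \<tau>) = ennreal (2 / \<psi> \<tau>)"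
    using pos by (subst ennreal_plus[symmetric]) simp_all
  finally have "ennreal (\<psi> \<tau>) * T_op R \<psi> (rearr_avg R g) \<tau> \<le> ennreal (\<psi> \<tau>) * (ennreal C * ennreal (2 / \<psi> \<tau>))"
    by (rule mult_left_mono) simp
  with rearr_avg_le_T_op_rearr_avg[OF q\<psi> t \<tau>, of g]
  have "ennreal (\<psi> (t / 2)) * fstarstar R f t \<le> ennreal (\<psi> \<tau>) * (ennreal C * ennreal (2 / \<psi> \<tau>))"
    unfolding fstarstar_eq_rearr_avg g_def[symmetric] by (rule order_trans)
  also have "\<dots> = ennreal (2 * C)"
    using pos \<open>0 < C\<close> by (simp add: ennreal_mult_divide_cancel ennreal_mult mult.left_commute mult.commute)
  finally have "(\<integral>\<^sup>+ u\<in>{\<tau><..<t/2}. ennreal (1 / \<psi> u) \<partial>lborel) \<le> ennreal (4 * (2 * C) * t / \<psi> t)"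
    unfolding f_def using \<tau> \<open>0 < C\<close> by (intro integral_inverse_le_if_test_bound[OF q\<psi> t]) simp_all
  then show ?thesis by simp
qed

lemma B_condition_right_if_ST_upper_estimate:
  assumes q\<phi>: "quasiconcave_on R \<phi>" and q\<psi>: "quasiconcave_on R \<psi>" and "0 < C"
    and U: "ST_upper_estimate R \<phi> \<psi> C"
  shows "B_condition R \<psi>"
proof (rule B_condition_if_half_integral[OF q\<psi>])
  show "0 < 8 * C" using \<open>0 < C\<close> by simp
  fix t assume t: "t \<in> ivl R"
  then have "0 < t" "ereal (t / 2) < R"
    using ereal_less_if_le_less[of "t / 2" t R] by (simp_all add: mem_ivl_iff)
  then show "(\<integral>\<^sup>+ s\<in>{0<..<t/2}. ennreal (1 / \<psi> s) \<partial>lborel) \<le> ennreal (8 * C * t / \<psi> t)"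
    by (intro nn_integral_Ioo_le_if_tails borel_measurable_inverse_indicator[OF q\<psi>]
        integral_inverse_tail_le_if_ST_upper_estimate[OF q\<phi> q\<psi> \<open>0 < C\<close> U t]) simp_all
qed

theorem lemma4p3:
  fixes R :: ereal and \<phi> \<psi> :: "real \<Rightarrow> real"
  assumes "0 < R"
    and "quasiconcave_on R \<phi>" and "quasiconcave_on R \<psi>"
  shows "(\<exists>c C. 0 < c \<and> c \<le> C \<and>
            (\<forall>f :: real \<Rightarrow> real. f \<in> borel_measurable (restrict_space lborel (ivl R)) \<longrightarrow>
              (\<forall>t\<in>ivl R.
                 ennreal c * (S_op R \<phi> (\<lambda>x. ennreal \<bar>f x\<bar>) t + T_op R \<psi> (\<lambda>x. ennreal \<bar>f x\<bar>) t)
                   \<le> S_op R \<phi> (fstarstar R f) t + T_op R \<psi> (fstarstar R f) t \<and>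
                 S_op R \<phi> (fstarstar R f) t + T_op R \<psi> (fstarstar R f) t
                   \<le> ennreal C * (S_op R \<phi> (\<lambda>x. ennreal \<bar>f x\<bar>) t + T_op R \<psi> (\<lambda>x. ennreal \<bar>f x\<bar>) t))))
         \<longleftrightarrow> B_condition R \<phi> \<and> B_condition R \<psi>" (is "?equivalence \<longleftrightarrow> _")
proof
  assume ?equivalence
  then obtain c C where "0 < c" "c \<le> C" "ST_upper_estimate R \<phi> \<psi> C"
    unfolding ST_upper_estimate_def by blast
  then have "0 < C" "ST_upper_estimate R \<phi> \<psi> C" by simp_all
  then show "B_condition R \<phi> \<and> B_condition R \<psi>"
    using B_condition_left_if_ST_upper_estimate[OF assms(2)]
      B_condition_right_if_ST_upper_estimate[OF assms(2,3)] by blast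
next
  assume "B_condition R \<phi> \<and> B_condition R \<psi>"
  then obtain C where "1 \<le> C" "ST_upper_estimate R \<phi> \<psi> C"
    using ST_upper_estimate_if_B_condition[OF assms(2,3)] by blast
  with S_T_abs_le_S_T_fstarstar show ?equivalence
    unfolding ST_upper_estimate_def by (intro exI[of _ 1] exI[of _ C]) auto
qed

end
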